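(* Let $C$ be a normal, closed cone with nonempty interior in a real Banach space. If $f:\operatorname{int} C\to\operatorname{int} C$ is $\tau$-condensing, then $\alpha f+(1-\alpha)\operatorname{id}$ is $\tau$-condensing for every $0<\alpha<1$.
   Context: A closed cone $C$ (closed convex, $\lambda C\subseteq C$ for $\lambda\ge0$, $C\cap(-C)=\{0\}$) induces the order $x\le y$ iff $y-x\in C$. $C$ is normal if there is $\kappa$ with $\|x\|\le\kappa\|y\|$ whenever $0\le x\le y$. Thompson's metric on $\operatorname{int}C$: $d_T(x,y)=\log\inf\{\beta\ge1:\beta^{-1}x\le y\le\beta x\}$. For a $d_T$-bounded set $A\subseteq\operatorname{int}C$, $\tau(A)=\inf\{d>0: A$ has a finite cover by sets of $d_T$-diameter $\le d\}$. A continuous map $f:D\to\operatorname{int}C$ ($D\subseteq\operatorname{int}C$) is $\tau$-condensing if $\tau(f(A))<\tau(A)$ for every $d_T$-bounded $A\subseteq D$ with $\tau(A)>0$. *)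

theory Defs
  imports "HOL-Analysis.Analysis" "HOL-Library.Extended_Real"
begin

definition closed_cone :: "'a::real_normed_vector set \<Rightarrow> bool" where
  "closed_cone C \<longleftrightarrow> closed C \<and> convex C \<and>
     (\<forall>x\<in>C. \<forall>l::real. l \<ge> 0 \<longrightarrow> l *\<^sub>R x \<in> C) \<and>
     C \<inter> uminus ` C = {0}"

definition cone_le :: "'a::real_normed_vector set \<Rightarrow> 'a \<Rightarrow> 'a \<Rightarrow> bool" where
  "cone_le C x y \<longleftrightarrow> y - x \<in> C"

definition normal_cone :: "'a::real_normed_vector set \<Rightarrow> bool" where
  "normal_cone C \<longleftrightarrow> (\<exists>\<kappa>::real. \<forall>x y. cone_le C 0 x \<and> cone_le C x y \<longrightarrow> norm x \<le> \<kappa> * norm y)"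

definition thompson :: "'a::real_normed_vector set \<Rightarrow> 'a \<Rightarrow> 'a \<Rightarrow> real" where
  "thompson C x y = ln (Inf {\<beta>::real. \<beta> \<ge> 1 \<and> cone_le C (inverse \<beta> *\<^sub>R x) y \<and> cone_le C y (\<beta> *\<^sub>R x)})"

definition dT_bounded :: "'a::real_normed_vector set \<Rightarrow> 'a set \<Rightarrow> bool" where
  "dT_bounded C A \<longleftrightarrow> A \<subseteq> interior C \<and> (\<exists>M. \<forall>x\<in>A. \<forall>y\<in>A. thompson C x y \<le> M)"

definition dT_finite_cover :: "'a::real_normed_vector set \<Rightarrow> 'a set \<Rightarrow> real \<Rightarrow> bool" where
  "dT_finite_cover C A d \<longleftrightarrow> (\<exists>F. finite F \<and> A \<subseteq> \<Union>F \<and>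
      (\<forall>S\<in>F. S \<subseteq> interior C \<and> (\<forall>x\<in>S. \<forall>y\<in>S. thompson C x y \<le> d)))"

text \<open>Kuratowski-type measure of noncompactness w.r.t. Thompson's metric
  (extended-real valued, so that the infimum of the empty set is \<infinity>).\<close>
definition tau :: "'a::real_normed_vector set \<Rightarrow> 'a set \<Rightarrow> ereal" where
  "tau C A = Inf (ereal ` {d. d > 0 \<and> dT_finite_cover C A d})"

definition dT_continuous_on :: "'a::real_normed_vector set \<Rightarrow> 'a set \<Rightarrow> ('a \<Rightarrow> 'a) \<Rightarrow> bool" where
  "dT_continuous_on C D f \<longleftrightarrow> (\<forall>x\<in>D. \<forall>e>0. \<exists>\<delta>>0. \<forall>y\<in>D.
      thompson C x y < \<delta> \<longrightarrow> thompson C (f x) (f y) < e)"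

definition tau_condensing :: "'a::real_normed_vector set \<Rightarrow> 'a set \<Rightarrow> ('a \<Rightarrow> 'a) \<Rightarrow> bool" where
  "tau_condensing C D f \<longleftrightarrow> D \<subseteq> interior C \<and> f ` D \<subseteq> interior C \<and> dT_continuous_on C D f \<and>
     (\<forall>A. A \<subseteq> D \<and> dT_bounded C A \<and> tau C A > 0 \<longrightarrow> tau C (f ` A) < tau C A)"

end

theory Submission
  imports Defs
begin

text \<open>
  Let \<open>g = \<alpha> f + (1 - \<alpha>) id\<close>, let \<open>A\<close> be Thompson-bounded with \<open>\<tau>(A) = r > 0\<close> and cover \<open>f(A)\<close>
  by finitely many sets of diameter \<open>d\<^sub>0 < r\<close>. Then \<open>f(A)\<close> is bounded too, so \<open>f\<close> moves the
  points of \<open>A\<close> a bounded Thompson distance and in particular \<open>f a \<ge> c a\<close> for a fixed \<open>c > 0\<close>.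
  If \<open>a, b\<close> are \<open>E\<close>-comparable and \<open>f a, f b\<close> are \<open>e\<^sup>s\<close>-comparable with \<open>e\<^sup>s \<le> E\<close>, this lower
  bound makes \<open>g a, g b\<close> even \<open>((1 - \<alpha>c) E + \<alpha>c e\<^sup>s)\<close>-comparable. Taking \<open>s\<close> between \<open>d\<^sub>0\<close> and
  \<open>r\<close>, some \<open>E > e\<^sup>r\<close> still gives a factor below \<open>e\<^sup>r\<close>; refining a cover of \<open>A\<close> of diameter
  \<open>< ln E\<close> by the cover of \<open>f(A)\<close> then yields \<open>\<tau>(g(A)) < r\<close>.
\<close>

lemma closed_cone_scaleR: "closed_cone C \<Longrightarrow> x \<in> C \<Longrightarrow> l \<ge> 0 \<Longrightarrow> l *\<^sub>R x \<in> C"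
  by (simp add: closed_cone_def)

lemma closed_cone_add:
  assumes "closed_cone C" "x \<in> C" "y \<in> C"
  shows "x + y \<in> C"
proof -
  have "(1/2::real) *\<^sub>R x + (1/2::real) *\<^sub>R y \<in> C"
    using assms by (intro convexD) (auto simp: closed_cone_def)
  from closed_cone_scaleR[OF assms(1) this, of 2] show ?thesis
    by (simp add: algebra_simps)
qed

lemma closed_cone_interior_convex_combination:
  assumes "closed_cone C" "x \<in> interior C" "y \<in> interior C" "0 \<le> a" "a \<le> 1"
  shows "a *\<^sub>R x + (1 - a) *\<^sub>R y \<in> interior C"
  using assms by (intro convexD) (auto simp: closed_cone_def convex_interior)

definition thompson_ratios :: "'a::real_normed_vector set \<Rightarrow> 'a \<Rightarrow> 'a \<Rightarrow> real set" where
  "thompson_ratios C x y =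
     {\<beta>. \<beta> \<ge> 1 \<and> cone_le C (inverse \<beta> *\<^sub>R x) y \<and> cone_le C y (\<beta> *\<^sub>R x)}"

lemma thompson_eq_ln_Inf: "thompson C x y = ln (Inf (thompson_ratios C x y))"
  by (simp add: thompson_def thompson_ratios_def)

lemma thompson_ratios_ge_1: "\<beta> \<in> thompson_ratios C x y \<Longrightarrow> \<beta> \<ge> 1"
  by (simp add: thompson_ratios_def)

lemma mem_thompson_ratios_iff:
  assumes "closed_cone C" "\<beta> \<ge> 1"
  shows "\<beta> \<in> thompson_ratios C x y \<longleftrightarrow> \<beta> *\<^sub>R y - x \<in> C \<and> \<beta> *\<^sub>R x - y \<in> C"
proof -
  have "y - inverse \<beta> *\<^sub>R x = inverse \<beta> *\<^sub>R (\<beta> *\<^sub>R y - x)"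
       "\<beta> *\<^sub>R y - x = \<beta> *\<^sub>R (y - inverse \<beta> *\<^sub>R x)"
    using assms(2) by (simp_all add: algebra_simps)
  then show ?thesis
    unfolding thompson_ratios_def cone_le_def
    using assms closed_cone_scaleR[OF assms(1), of "\<beta> *\<^sub>R y - x" "inverse \<beta>"]
      closed_cone_scaleR[OF assms(1), of "y - inverse \<beta> *\<^sub>R x" \<beta>]
    by auto
qed

lemma thompson_ratios_commute:
  assumes "closed_cone C"
  shows "thompson_ratios C x y = thompson_ratios C y x"
  using mem_thompson_ratios_iff[OF assms] thompson_ratios_ge_1 by blast

lemma thompson_commute: "closed_cone C \<Longrightarrow> thompson C x y = thompson C y x"
  by (simp add: thompson_eq_ln_Inf thompson_ratios_commute)

lemma thompson_ratios_nonempty: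
  assumes cc: "closed_cone C" and x: "x \<in> interior C" and y: "y \<in> interior C"
  shows "thompson_ratios C x y \<noteq> {}"
proof -
  obtain e where e: "e > 0" "ball x e \<subseteq> C" using x by (meson mem_interior)
  obtain e' where e': "e' > 0" "ball y e' \<subseteq> C" using y by (meson mem_interior)
  define \<beta> where "\<beta> = 1 + norm y / e + norm x / e'"
  have \<beta>: "\<beta> \<ge> 1" using e e' by (simp add: \<beta>_def)
  have "norm y < e * \<beta>" "norm x < e' * \<beta>"
    using e e' by (simp_all add: \<beta>_def algebra_simps add_pos_nonneg)
  then have "x - inverse \<beta> *\<^sub>R y \<in> ball x e" "y - inverse \<beta> *\<^sub>R x \<in> ball y e'"
    using \<beta> by (simp_all add: dist_norm field_simps)
  then have "\<beta> *\<^sub>R (x - inverse \<beta> *\<^sub>R y) \<in> C" "\<beta> *\<^sub>R (y - inverse \<beta> *\<^sub>R x) \<in> C"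
    using e e' \<beta> by (auto intro!: closed_cone_scaleR[OF cc])
  then have "\<beta> *\<^sub>R x - y \<in> C" "\<beta> *\<^sub>R y - x \<in> C"
    using \<beta> by (simp_all add: algebra_simps)
  then show ?thesis
    using mem_thompson_ratios_iff[OF cc \<beta>] by blast
qed

lemma thompson_ratios_upward_closed:
  assumes cc: "closed_cone C" and "x \<in> C" "y \<in> C"
    and \<beta>: "\<beta> \<in> thompson_ratios C x y" and "\<beta> \<le> \<beta>'"
  shows "\<beta>' \<in> thompson_ratios C x y"
proof -
  have eqs: "\<beta>' *\<^sub>R y - x = (\<beta> *\<^sub>R y - x) + (\<beta>' - \<beta>) *\<^sub>R y"
    "\<beta>' *\<^sub>R x - y = (\<beta> *\<^sub>R x - y) + (\<beta>' - \<beta>) *\<^sub>R x"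
    by (simp_all add: algebra_simps)
  have ge1: "\<beta> \<ge> 1" "\<beta>' \<ge> 1" using assms thompson_ratios_ge_1 by force+
  have "\<beta> *\<^sub>R y - x \<in> C" "\<beta> *\<^sub>R x - y \<in> C"
    using \<beta> mem_thompson_ratios_iff[OF cc ge1(1)] by auto
  then have "(\<beta> *\<^sub>R y - x) + (\<beta>' - \<beta>) *\<^sub>R y \<in> C" "(\<beta> *\<^sub>R x - y) + (\<beta>' - \<beta>) *\<^sub>R x \<in> C"
    using assms by (auto intro!: closed_cone_add[OF cc] closed_cone_scaleR[OF cc])
  then show ?thesis
    unfolding mem_thompson_ratios_iff[OF cc ge1(2)] eqs by blast
qed

lemma thompson_ratios_mult:
  assumes cc: "closed_cone C"
    and b1: "b1 \<in> thompson_ratios C x y" and b2: "b2 \<in> thompson_ratios C y z"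
  shows "b1 * b2 \<in> thompson_ratios C x z"
proof -
  have eqs: "(b1 * b2) *\<^sub>R z - x = b1 *\<^sub>R (b2 *\<^sub>R z - y) + (b1 *\<^sub>R y - x)"
    "(b1 * b2) *\<^sub>R x - z = b2 *\<^sub>R (b1 *\<^sub>R x - y) + (b2 *\<^sub>R y - z)"
    by (simp_all add: algebra_simps)
  have ge1: "b1 \<ge> 1" "b2 \<ge> 1" using b1 b2 thompson_ratios_ge_1 by auto
  then have ge1': "b1 * b2 \<ge> 1" by (metis mult_mono' mult_1_left zero_le_one)
  have "b1 *\<^sub>R y - x \<in> C" "b1 *\<^sub>R x - y \<in> C" "b2 *\<^sub>R z - y \<in> C" "b2 *\<^sub>R y - z \<in> C"
    using b1 b2 mem_thompson_ratios_iff[OF cc] ge1 by auto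
  then have "b1 *\<^sub>R (b2 *\<^sub>R z - y) + (b1 *\<^sub>R y - x) \<in> C"
    "b2 *\<^sub>R (b1 *\<^sub>R x - y) + (b2 *\<^sub>R y - z) \<in> C"
    using ge1 by (auto intro!: closed_cone_add[OF cc] closed_cone_scaleR[OF cc])
  then show ?thesis
    unfolding mem_thompson_ratios_iff[OF cc ge1'] eqs by blast
qed

lemma thompson_ratios_convex_combination:
  assumes cc: "closed_cone C"
    and "\<beta> \<in> thompson_ratios C x x'" "\<beta> \<in> thompson_ratios C y y'" "0 \<le> a" "a \<le> 1"
  shows "\<beta> \<in> thompson_ratios C (a *\<^sub>R x + (1 - a) *\<^sub>R y) (a *\<^sub>R x' + (1 - a) *\<^sub>R y')"
proof -
  have eqs:
    "\<beta> *\<^sub>R (a *\<^sub>R x' + (1 - a) *\<^sub>R y') - (a *\<^sub>R x + (1 - a) *\<^sub>R y)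
       = a *\<^sub>R (\<beta> *\<^sub>R x' - x) + (1 - a) *\<^sub>R (\<beta> *\<^sub>R y' - y)"
    "\<beta> *\<^sub>R (a *\<^sub>R x + (1 - a) *\<^sub>R y) - (a *\<^sub>R x' + (1 - a) *\<^sub>R y')
       = a *\<^sub>R (\<beta> *\<^sub>R x - x') + (1 - a) *\<^sub>R (\<beta> *\<^sub>R y - y')"
    by (simp_all add: algebra_simps)
  have ge1: "\<beta> \<ge> 1" using assms thompson_ratios_ge_1 by force
  have "\<beta> *\<^sub>R x' - x \<in> C" "\<beta> *\<^sub>R x - x' \<in> C" "\<beta> *\<^sub>R y' - y \<in> C" "\<beta> *\<^sub>R y - y' \<in> C"
    using mem_thompson_ratios_iff[OF cc ge1] assms by auto
  then have "a *\<^sub>R (\<beta> *\<^sub>R x' - x) + (1 - a) *\<^sub>R (\<beta> *\<^sub>R y' - y) \<in> C"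
    "a *\<^sub>R (\<beta> *\<^sub>R x - x') + (1 - a) *\<^sub>R (\<beta> *\<^sub>R y - y') \<in> C"
    using assms by (auto intro!: closed_cone_add[OF cc] closed_cone_scaleR[OF cc])
  then show ?thesis
    unfolding mem_thompson_ratios_iff[OF cc ge1] eqs by blast
qed

text \<open>The vector \<open>v - c b\<close> in the cone absorbs part of the excess \<open>(B1 - B2)\<close>: this is the only
  place where a strict gain over the trivial factor \<open>B1\<close> is produced.\<close>
lemma cone_convex_combination_contraction:
  assumes cc: "closed_cone C"
    and "B1 *\<^sub>R b - a \<in> C" "B2 *\<^sub>R v - u \<in> C" "v - c *\<^sub>R b \<in> C" "v \<in> C" "B2 \<le> B1"
    and "0 \<le> c" "c \<le> 1" "0 \<le> \<alpha>" "\<alpha> \<le> 1"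
  shows "((1 - \<alpha> * c) * B1 + \<alpha> * c * B2) *\<^sub>R (\<alpha> *\<^sub>R v + (1 - \<alpha>) *\<^sub>R b)
           - (\<alpha> *\<^sub>R u + (1 - \<alpha>) *\<^sub>R a) \<in> C"
proof -
  have eq: "((1 - \<alpha> * c) * B1 + \<alpha> * c * B2) *\<^sub>R (\<alpha> *\<^sub>R v + (1 - \<alpha>) *\<^sub>R b)
          - (\<alpha> *\<^sub>R u + (1 - \<alpha>) *\<^sub>R a)
      = \<alpha> *\<^sub>R (B2 *\<^sub>R v - u) + (1 - \<alpha>) *\<^sub>R (B1 *\<^sub>R b - a)
        + (\<alpha> * (B1 - B2) * (1 - \<alpha>)) *\<^sub>R (v - c *\<^sub>R b) + (\<alpha> * (B1 - B2) * \<alpha> * (1 - c)) *\<^sub>R v"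
    by (simp add: algebra_simps)
  have "\<alpha> *\<^sub>R (B2 *\<^sub>R v - u) + (1 - \<alpha>) *\<^sub>R (B1 *\<^sub>R b - a)
        + (\<alpha> * (B1 - B2) * (1 - \<alpha>)) *\<^sub>R (v - c *\<^sub>R b) + (\<alpha> * (B1 - B2) * \<alpha> * (1 - c)) *\<^sub>R v \<in> C"
    using assms by (auto intro!: closed_cone_add[OF cc] closed_cone_scaleR[OF cc])
  then show ?thesis unfolding eq .
qed

lemma thompson_ratios_convex_combination_contraction:
  assumes cc: "closed_cone C"
    and B1: "B1 \<in> thompson_ratios C a b" and B2: "B2 \<in> thompson_ratios C u v" "B2 \<le> B1"
    and "u - c *\<^sub>R a \<in> C" "v - c *\<^sub>R b \<in> C" "u \<in> C" "v \<in> C"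
    and c: "0 \<le> c" "c \<le> 1" and \<alpha>: "0 \<le> \<alpha>" "\<alpha> \<le> 1"
  shows "(1 - \<alpha> * c) * B1 + \<alpha> * c * B2
           \<in> thompson_ratios C (\<alpha> *\<^sub>R u + (1 - \<alpha>) *\<^sub>R a) (\<alpha> *\<^sub>R v + (1 - \<alpha>) *\<^sub>R b)"
proof -
  have ge1: "B1 \<ge> 1" "B2 \<ge> 1" using B1 B2 thompson_ratios_ge_1 by auto
  have "\<alpha> * c \<le> 1" using c \<alpha> by (simp add: mult_le_one)
  then have "(1 - \<alpha> * c) * (B1 - B2) \<ge> 0"
    using B2 by simp
  moreover have "(1 - \<alpha> * c) * B1 + \<alpha> * c * B2 - B2 = (1 - \<alpha> * c) * (B1 - B2)"
    by (simp add: algebra_simps)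
  ultimately have ge1': "(1 - \<alpha> * c) * B1 + \<alpha> * c * B2 \<ge> 1" using ge1 by linarith
  have "B1 *\<^sub>R b - a \<in> C" "B1 *\<^sub>R a - b \<in> C" "B2 *\<^sub>R v - u \<in> C" "B2 *\<^sub>R u - v \<in> C"
    using B1 B2 mem_thompson_ratios_iff[OF cc] ge1 by auto
  then have "((1 - \<alpha> * c) * B1 + \<alpha> * c * B2) *\<^sub>R (\<alpha> *\<^sub>R v + (1 - \<alpha>) *\<^sub>R b)
               - (\<alpha> *\<^sub>R u + (1 - \<alpha>) *\<^sub>R a) \<in> C"
    and "((1 - \<alpha> * c) * B1 + \<alpha> * c * B2) *\<^sub>R (\<alpha> *\<^sub>R u + (1 - \<alpha>) *\<^sub>R a)
               - (\<alpha> *\<^sub>R v + (1 - \<alpha>) *\<^sub>R b) \<in> C"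
    by (intro cone_convex_combination_contraction[OF cc]; use assms in simp)+
  then show ?thesis
    using mem_thompson_ratios_iff[OF cc ge1'] by blast
qed

lemma Inf_thompson_ratios_ge_1:
  assumes "closed_cone C" "x \<in> interior C" "y \<in> interior C"
  shows "Inf (thompson_ratios C x y) \<ge> 1"
  using thompson_ratios_nonempty[OF assms]
  by (intro cInf_greatest) (auto simp: thompson_ratios_ge_1)

lemma thompson_le_ln:
  assumes "closed_cone C" "x \<in> interior C" "y \<in> interior C" "\<beta> \<in> thompson_ratios C x y"
  shows "thompson C x y \<le> ln \<beta>"
proof -
  have "Inf (thompson_ratios C x y) \<le> \<beta>"
    using assms(4) by (intro cInf_lower bdd_belowI[of _ 1]) (auto simp: thompson_ratios_ge_1)
  then show ?thesis
    using Inf_thompson_ratios_ge_1[OF assms(1-3)] by (simp add: thompson_eq_ln_Inf)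
qed

lemma exp_mem_thompson_ratios:
  assumes cc: "closed_cone C" and x: "x \<in> interior C" and y: "y \<in> interior C"
    and "thompson C x y < d"
  shows "exp d \<in> thompson_ratios C x y"
proof -
  have I: "Inf (thompson_ratios C x y) \<ge> 1" by (rule Inf_thompson_ratios_ge_1[OF cc x y])
  have "exp (ln (Inf (thompson_ratios C x y))) < exp d"
    using assms(4) by (simp add: thompson_eq_ln_Inf)
  then have "Inf (thompson_ratios C x y) < exp d"
    using I by simp
  then obtain t where t: "t \<in> thompson_ratios C x y" "t < exp d"
    using thompson_ratios_nonempty[OF cc x y] by (meson cInf_lessD)
  show ?thesis
    by (rule thompson_ratios_upward_closed[OF cc _ _ t(1)]) (use x y t(2) interior_subset in auto)
qed

lemma thompson_triangle:
  assumes cc: "closed_cone C"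
    and x: "x \<in> interior C" and y: "y \<in> interior C" and z: "z \<in> interior C"
  shows "thompson C x z \<le> thompson C x y + thompson C y z"
proof (rule field_le_epsilon)
  fix e :: real assume "e > 0"
  then have "exp (thompson C x y + e/2) \<in> thompson_ratios C x y"
    and "exp (thompson C y z + e/2) \<in> thompson_ratios C y z"
    using assms by (auto intro: exp_mem_thompson_ratios)
  then have "exp (thompson C x y + e/2) * exp (thompson C y z + e/2) \<in> thompson_ratios C x z"
    by (rule thompson_ratios_mult[OF cc])
  from thompson_le_ln[OF cc x z this]
  show "thompson C x z \<le> thompson C x y + thompson C y z + e"
    by (simp add: ln_mult)
qed

lemma cone_lower_bound_of_thompson_less:
  assumes cc: "closed_cone C" and "x \<in> interior C" "y \<in> interior C" "thompson C x y < R"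
  shows "y - exp (- R) *\<^sub>R x \<in> C"
proof -
  have R: "exp R \<in> thompson_ratios C x y"
    by (rule exp_mem_thompson_ratios[OF assms])
  then have "exp R *\<^sub>R y - x \<in> C"
    using mem_thompson_ratios_iff[OF cc thompson_ratios_ge_1[OF R]] by blast
  from closed_cone_scaleR[OF cc this, of "exp (- R)"] show ?thesis
    by (simp add: algebra_simps exp_minus_inverse)
qed

lemma dT_bounded_if_finite_cover:
  assumes cc: "closed_cone C" and "dT_finite_cover C B d"
  shows "dT_bounded C B"
proof -
  obtain F where F: "finite F" "B \<subseteq> \<Union>F"
    "\<forall>S\<in>F. S \<subseteq> interior C \<and> (\<forall>x\<in>S. \<forall>y\<in>S. thompson C x y \<le> d)"
    using assms(2) unfolding dT_finite_cover_def by blast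
  have B: "B \<subseteq> interior C" using F(2,3) by blast
  show ?thesis
  proof (cases "B = {}")
    case True
    then show ?thesis by (simp add: dT_bounded_def)
  next
    case False
    then obtain b0 where b0: "b0 \<in> B" by blast
    define p where "p S = (SOME z. z \<in> S \<inter> B)" for S
    define K where "K = (\<Sum>S\<in>F. \<bar>thompson C b0 (p S)\<bar>)"
    have near: "thompson C b0 x \<le> K + d" if x: "x \<in> B" for x
    proof -
      obtain S where S: "S \<in> F" "x \<in> S" using F(2) x by blast
      have pS: "p S \<in> S \<inter> B" unfolding p_def by (rule someI[of _ x]) (use S x in blast)
      have "\<bar>thompson C b0 (p S)\<bar> \<le> K"
        unfolding K_def by (rule member_le_sum[OF S(1) _ F(1)]) simp
      moreover have "thompson C (p S) x \<le> d" using bspec[OF F(3) S(1)] pS S(2) by blast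
      moreover have "thompson C b0 x \<le> thompson C b0 (p S) + thompson C (p S) x"
        by (rule thompson_triangle[OF cc]) (use pS x b0 B in blast)+
      ultimately show ?thesis by linarith
    qed
    have "thompson C x y \<le> (K + d) + (K + d)" if xy: "x \<in> B" "y \<in> B" for x y
    proof -
      have "thompson C x y \<le> thompson C x b0 + thompson C b0 y"
        by (rule thompson_triangle[OF cc]) (use xy b0 B in blast)+
      moreover have "thompson C x b0 = thompson C b0 x" by (rule thompson_commute[OF cc])
      ultimately show ?thesis using near[OF xy(1)] near[OF xy(2)] by linarith
    qed
    then show ?thesis using B unfolding dT_bounded_def by blast
  qed
qed

lemma thompson_displacement_bounded:
  assumes cc: "closed_cone C" and A: "dT_bounded C A" and fA: "dT_bounded C (f ` A)"
  shows "\<exists>R>0. \<forall>a\<in>A. thompson C a (f a) < R"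
proof (cases "A = {}")
  case False
  then obtain a0 where a0: "a0 \<in> A" by blast
  obtain M where M: "\<forall>x\<in>A. \<forall>y\<in>A. thompson C x y \<le> M" and AC: "A \<subseteq> interior C"
    using A by (auto simp: dT_bounded_def)
  obtain M' where M': "\<forall>x\<in>f ` A. \<forall>y\<in>f ` A. thompson C x y \<le> M'"
    and fAC: "f ` A \<subseteq> interior C"
    using fA by (auto simp: dT_bounded_def)
  define R where "R = M + thompson C a0 (f a0) + M'"
  have "thompson C a (f a) \<le> R" if a: "a \<in> A" for a
  proof -
    have "thompson C a (f a) \<le> thompson C a a0 + thompson C a0 (f a)"
      by (rule thompson_triangle[OF cc]) (use a a0 AC fAC in blast)+
    moreover have "thompson C a0 (f a) \<le> thompson C a0 (f a0) + thompson C (f a0) (f a)"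
      by (rule thompson_triangle[OF cc]) (use a a0 AC fAC in blast)+
    moreover have "thompson C a a0 \<le> M" "thompson C (f a0) (f a) \<le> M'"
      using M M' a a0 by blast+
    ultimately show ?thesis unfolding R_def by linarith
  qed
  then have "\<forall>a\<in>A. thompson C a (f a) < max 0 R + 1" by fastforce
  then show ?thesis by (intro exI[of _ "max 0 R + 1"]) simp
qed (auto intro: exI[of _ 1])

lemma tau_le_if_finite_cover: "0 < d \<Longrightarrow> dT_finite_cover C A d \<Longrightarrow> tau C A \<le> ereal d"
  unfolding tau_def by (intro Inf_lower imageI) auto

lemma finite_cover_if_tau_less:
  "tau C A < ereal d \<Longrightarrow> \<exists>d'. 0 < d' \<and> d' < d \<and> dT_finite_cover C A d'"
  unfolding tau_def by (auto simp: Inf_less_iff)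

lemma tau_less_infinity_if_dT_bounded:
  assumes "dT_bounded C A"
  shows "tau C A < \<infinity>"
proof -
  obtain M where "A \<subseteq> interior C" "\<forall>x\<in>A. \<forall>y\<in>A. thompson C x y \<le> M"
    using assms by (auto simp: dT_bounded_def)
  then have "dT_finite_cover C A (max M 1)"
    unfolding dT_finite_cover_def by (intro exI[of _ "{A}"]) force
  then have "tau C A \<le> ereal (max M 1)" by (rule tau_le_if_finite_cover[rotated]) simp
  then show ?thesis
    by (rule le_less_trans) (simp add: max_def)
qed

lemma dT_finite_cover_refine_image:
  assumes cover: "dT_finite_cover C A d" and cover': "dT_finite_cover C (f ` A) d'"
    and gA: "g ` A \<subseteq> interior C"
    and est: "\<And>a b. a \<in> A \<Longrightarrow> b \<in> A \<Longrightarrow> thompson C a b \<le> d \<Longrightarrow>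
                thompson C (f a) (f b) \<le> d' \<Longrightarrow> thompson C (g a) (g b) \<le> D"
  shows "dT_finite_cover C (g ` A) D"
proof -
  obtain F where F: "finite F" "A \<subseteq> \<Union>F"
    "\<forall>S\<in>F. S \<subseteq> interior C \<and> (\<forall>x\<in>S. \<forall>y\<in>S. thompson C x y \<le> d)"
    using cover unfolding dT_finite_cover_def by blast
  obtain F' where F': "finite F'" "f ` A \<subseteq> \<Union>F'"
    "\<forall>T\<in>F'. T \<subseteq> interior C \<and> (\<forall>x\<in>T. \<forall>y\<in>T. thompson C x y \<le> d')"
    using cover' unfolding dT_finite_cover_def by blast
  define G where "G = (\<lambda>(S, T). g ` (A \<inter> S \<inter> f -` T)) ` (F \<times> F')"
  have "finite G" unfolding G_def using F(1) F'(1) by simp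
  moreover have "g ` A \<subseteq> \<Union>G"
  proof
    fix y assume "y \<in> g ` A"
    then obtain a where a: "a \<in> A" "y = g a" by blast
    obtain S T where "S \<in> F" "a \<in> S" "T \<in> F'" "f a \<in> T" using F(2) F'(2) a(1) by blast
    then show "y \<in> \<Union>G" unfolding G_def using a by (auto intro!: bexI[of _ "(S, T)"])
  qed
  moreover have "P \<subseteq> interior C \<and> (\<forall>x\<in>P. \<forall>y\<in>P. thompson C x y \<le> D)" if "P \<in> G" for P
  proof
    obtain S T where ST: "S \<in> F" "T \<in> F'" and P: "P = g ` (A \<inter> S \<inter> f -` T)"
      using \<open>P \<in> G\<close> unfolding G_def by blast
    show "P \<subseteq> interior C" using P gA by blast
    show "\<forall>x\<in>P. \<forall>y\<in>P. thompson C x y \<le> D"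
    proof (intro ballI)
      fix x y assume "x \<in> P" "y \<in> P"
      then obtain a b where ab: "a \<in> A \<inter> S \<inter> f -` T" "b \<in> A \<inter> S \<inter> f -` T"
        and xy: "x = g a" "y = g b"
        using P by blast
      have "thompson C a b \<le> d" using ab ST(1) F(3) by blast
      moreover have "thompson C (f a) (f b) \<le> d'" using ab ST(2) F'(3) by blast
      ultimately show "thompson C x y \<le> D" using ab xy est by blast
    qed
  qed
  ultimately show ?thesis unfolding dT_finite_cover_def by (intro exI[of _ G]) blast
qed

lemma exists_gt_exp_ln_convex_combination_less:
  fixes r s k :: real
  assumes "0 < s" "s < r" "0 < k" "k < 1"
  shows "\<exists>E. exp r < E \<and> 0 < ln ((1 - k) * E + k * exp s) \<and> ln ((1 - k) * E + k * exp s) < r"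
proof -
  define E where "E = exp r + k * (exp r - exp s) / (2 * (1 - k))"
  have "exp s < exp r" using assms by simp
  then have "exp r < E" using assms by (simp add: E_def)
  have "(1 - k) * E + k * exp s = exp r - k * (exp r - exp s) / 2"
    using assms by (simp add: E_def field_simps)
  then have below: "(1 - k) * E + k * exp s < exp r"
    using assms \<open>exp s < exp r\<close> by simp
  have "E - exp s \<ge> 0" using \<open>exp s < exp r\<close> \<open>exp r < E\<close> by linarith
  then have "(1 - k) * (E - exp s) \<ge> 0" using assms by simp
  moreover have "(1 - k) * E + k * exp s = exp s + (1 - k) * (E - exp s)"
    by (simp add: algebra_simps)
  moreover have "1 < exp s" using assms by simp
  ultimately have above: "1 < (1 - k) * E + k * exp s" by linarith
  show ?thesis
    using \<open>exp r < E\<close> above below ln_less_cancel_iff[of _ "exp r"] by (intro exI[of _ E]) simp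
qed

lemma thompson_convex_combination_le:
  assumes cc: "closed_cone C"
    and ab: "a \<in> interior C" "b \<in> interior C" and uv: "u \<in> interior C" "v \<in> interior C"
    and "thompson C a b < ln E" "thompson C u v < s" "exp s \<le> E"
    and "u - c *\<^sub>R a \<in> C" "v - c *\<^sub>R b \<in> C" "0 \<le> c" "c \<le> 1" "0 \<le> \<alpha>" "\<alpha> \<le> 1"
  shows "thompson C (\<alpha> *\<^sub>R u + (1 - \<alpha>) *\<^sub>R a) (\<alpha> *\<^sub>R v + (1 - \<alpha>) *\<^sub>R b)
           \<le> ln ((1 - \<alpha> * c) * E + \<alpha> * c * exp s)"
proof -
  have "E > 0" using \<open>exp s \<le> E\<close> exp_gt_zero[of s] by linarith
  then have "E \<in> thompson_ratios C a b"
    using exp_mem_thompson_ratios[OF cc ab \<open>thompson C a b < ln E\<close>] by simp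
  moreover have "exp s \<in> thompson_ratios C u v" by (rule exp_mem_thompson_ratios) (use assms in auto)
  ultimately have "(1 - \<alpha> * c) * E + \<alpha> * c * exp s
      \<in> thompson_ratios C (\<alpha> *\<^sub>R u + (1 - \<alpha>) *\<^sub>R a) (\<alpha> *\<^sub>R v + (1 - \<alpha>) *\<^sub>R b)"
    using assms interior_subset by (intro thompson_ratios_convex_combination_contraction[OF cc]) auto
  then show ?thesis
    using assms by (intro thompson_le_ln[OF cc] closed_cone_interior_convex_combination) auto
qed

lemma dT_continuous_on_id: "dT_continuous_on C D (\<lambda>x. x)"
  unfolding dT_continuous_on_def by blast

lemma dT_continuous_on_convex_combination:
  assumes cc: "closed_cone C"
    and f: "dT_continuous_on C D f" "f ` D \<subseteq> interior C"
    and h: "dT_continuous_on C D h" "h ` D \<subseteq> interior C"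
    and \<alpha>: "0 \<le> \<alpha>" "\<alpha> \<le> 1"
  shows "dT_continuous_on C D (\<lambda>x. \<alpha> *\<^sub>R f x + (1 - \<alpha>) *\<^sub>R h x)"
  unfolding dT_continuous_on_def
proof (intro ballI allI impI)
  fix x and e :: real assume x: "x \<in> D" and "e > 0"
  then have "e / 2 > 0" by simp
  then obtain \<delta>f \<delta>h where "\<delta>f > 0" "\<delta>h > 0"
    and \<delta>f: "\<forall>y\<in>D. thompson C x y < \<delta>f \<longrightarrow> thompson C (f x) (f y) < e / 2"
    and \<delta>h: "\<forall>y\<in>D. thompson C x y < \<delta>h \<longrightarrow> thompson C (h x) (h y) < e / 2"
    using f(1) h(1) x unfolding dT_continuous_on_def by blast
  show "\<exists>\<delta>>0. \<forall>y\<in>D. thompson C x y < \<delta> \<longrightarrow>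
          thompson C (\<alpha> *\<^sub>R f x + (1 - \<alpha>) *\<^sub>R h x) (\<alpha> *\<^sub>R f y + (1 - \<alpha>) *\<^sub>R h y) < e"
  proof (intro exI[of _ "min \<delta>f \<delta>h"] conjI ballI impI)
    show "min \<delta>f \<delta>h > 0" using \<open>\<delta>f > 0\<close> \<open>\<delta>h > 0\<close> by simp
    fix y assume y: "y \<in> D" and "thompson C x y < min \<delta>f \<delta>h"
    then have "exp (e / 2) \<in> thompson_ratios C (f x) (f y)"
      and "exp (e / 2) \<in> thompson_ratios C (h x) (h y)"
      using x f(2) h(2) \<delta>f \<delta>h by (auto intro!: exp_mem_thompson_ratios[OF cc])
    then have "exp (e / 2) \<in> thompson_ratios C (\<alpha> *\<^sub>R f x + (1 - \<alpha>) *\<^sub>R h x) (\<alpha> *\<^sub>R f y + (1 - \<alpha>) *\<^sub>R h y)"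
      using \<alpha> by (rule thompson_ratios_convex_combination[OF cc])
    moreover have "\<alpha> *\<^sub>R f x + (1 - \<alpha>) *\<^sub>R h x \<in> interior C" "\<alpha> *\<^sub>R f y + (1 - \<alpha>) *\<^sub>R h y \<in> interior C"
      using x y f(2) h(2) \<alpha> by (auto intro!: closed_cone_interior_convex_combination[OF cc])
    ultimately have "thompson C (\<alpha> *\<^sub>R f x + (1 - \<alpha>) *\<^sub>R h x) (\<alpha> *\<^sub>R f y + (1 - \<alpha>) *\<^sub>R h y) \<le> e / 2"
      using thompson_le_ln[OF cc] by fastforce
    then show "thompson C (\<alpha> *\<^sub>R f x + (1 - \<alpha>) *\<^sub>R h x) (\<alpha> *\<^sub>R f y + (1 - \<alpha>) *\<^sub>R h y) < e"
      using \<open>e > 0\<close> by linarith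
  qed
qed

lemma tau_convex_combination_less:
  assumes cc: "closed_cone C" and AC: "A \<subseteq> interior C" and fA: "f ` A \<subseteq> interior C"
    and bd: "dT_bounded C A" and pos: "tau C A > 0" and lt: "tau C (f ` A) < tau C A"
    and \<alpha>: "0 < \<alpha>" "\<alpha> < 1"
  shows "tau C ((\<lambda>x. \<alpha> *\<^sub>R f x + (1 - \<alpha>) *\<^sub>R x) ` A) < tau C A"
proof -
  obtain r where r: "tau C A = ereal r"
    using pos tau_less_infinity_if_dT_bounded[OF bd] by (cases "tau C A") auto
  obtain d0 where d0: "0 < d0" "d0 < r" "dT_finite_cover C (f ` A) d0"
    using finite_cover_if_tau_less lt r by metis
  obtain R where "R > 0" and R: "\<forall>a\<in>A. thompson C a (f a) < R"
    using thompson_displacement_bounded[OF cc bd dT_bounded_if_finite_cover[OF cc d0(3)]] by blast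
  define c where "c = exp (- R)"
  have c: "0 < c" "c \<le> 1" using \<open>R > 0\<close> by (simp_all add: c_def)
  have below: "f a - c *\<^sub>R a \<in> C" if "a \<in> A" for a
    unfolding c_def using that AC fA R by (intro cone_lower_bound_of_thompson_less[OF cc]) auto
  define s where "s = (d0 + r) / 2"
  have s: "0 < s" "d0 < s" "s < r" using d0 by (simp_all add: s_def)
  have "0 < \<alpha> * c" using \<alpha> c by simp
  moreover have "\<alpha> * c < 1" using \<alpha> c mult_left_le[of c \<alpha>] by linarith
  ultimately obtain E where E: "exp r < E"
    and D: "0 < ln ((1 - \<alpha> * c) * E + \<alpha> * c * exp s)" "ln ((1 - \<alpha> * c) * E + \<alpha> * c * exp s) < r"
    using exists_gt_exp_ln_convex_combination_less[OF s(1,3)] by blast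
  have "exp s \<le> E" using E s(3) by (metis exp_less_cancel_iff less_trans order.strict_implies_order)
  have "r < ln E" using E by (metis exp_gt_zero less_trans ln_exp ln_less_cancel_iff)
  then obtain d1 where d1: "d1 < ln E" "dT_finite_cover C A d1"
    using finite_cover_if_tau_less[of C A "ln E"] r by auto
  have "dT_finite_cover C ((\<lambda>x. \<alpha> *\<^sub>R f x + (1 - \<alpha>) *\<^sub>R x) ` A)
          (ln ((1 - \<alpha> * c) * E + \<alpha> * c * exp s))"
  proof (rule dT_finite_cover_refine_image[OF d1(2) d0(3)])
    show "(\<lambda>x. \<alpha> *\<^sub>R f x + (1 - \<alpha>) *\<^sub>R x) ` A \<subseteq> interior C"
      using AC fA \<alpha> by (auto intro!: closed_cone_interior_convex_combination[OF cc])
    fix a b assume "a \<in> A" "b \<in> A" "thompson C a b \<le> d1" "thompson C (f a) (f b) \<le> d0"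
    then show "thompson C (\<alpha> *\<^sub>R f a + (1 - \<alpha>) *\<^sub>R a) (\<alpha> *\<^sub>R f b + (1 - \<alpha>) *\<^sub>R b)
                 \<le> ln ((1 - \<alpha> * c) * E + \<alpha> * c * exp s)"
      using AC fA below d1(1) s(2) \<open>exp s \<le> E\<close> c \<alpha>
      by (intro thompson_convex_combination_le[OF cc]) auto
  qed
  then have "tau C ((\<lambda>x. \<alpha> *\<^sub>R f x + (1 - \<alpha>) *\<^sub>R x) ` A)
               \<le> ereal (ln ((1 - \<alpha> * c) * E + \<alpha> * c * exp s))"
    using D(1) by (intro tau_le_if_finite_cover)
  also have "\<dots> < tau C A" using D(2) r by simp
  finally show ?thesis .
qed

theorem corollary2p6:
  fixes C :: "'a::banach set" and f :: "'a \<Rightarrow> 'a" and \<alpha> :: real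
  assumes "closed_cone C" and "normal_cone C" and "interior C \<noteq> {}"
    and "tau_condensing C (interior C) f"
    and "0 < \<alpha>" and "\<alpha> < 1"
  shows "tau_condensing C (interior C) (\<lambda>x. \<alpha> *\<^sub>R f x + (1 - \<alpha>) *\<^sub>R x)"
proof -
  note cc = \<open>closed_cone C\<close>
  have f: "f ` interior C \<subseteq> interior C" "dT_continuous_on C (interior C) f"
    and condensing: "\<And>A. A \<subseteq> interior C \<Longrightarrow> dT_bounded C A \<Longrightarrow> tau C A > 0 \<Longrightarrow>
                           tau C (f ` A) < tau C A"
    using assms(4) unfolding tau_condensing_def by blast+
  show ?thesis
    unfolding tau_condensing_def
  proof (intro conjI allI impI)
    show "(\<lambda>x. \<alpha> *\<^sub>R f x + (1 - \<alpha>) *\<^sub>R x) ` interior C \<subseteq> interior C"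
      using f(1) assms(5,6) by (auto intro!: closed_cone_interior_convex_combination[OF cc])
    show "dT_continuous_on C (interior C) (\<lambda>x. \<alpha> *\<^sub>R f x + (1 - \<alpha>) *\<^sub>R x)"
      using dT_continuous_on_convex_combination[OF cc f(2,1) dT_continuous_on_id, of \<alpha>] assms(5,6)
      by simp
    fix A assume "A \<subseteq> interior C \<and> dT_bounded C A \<and> 0 < tau C A"
    then show "tau C ((\<lambda>x. \<alpha> *\<^sub>R f x + (1 - \<alpha>) *\<^sub>R x) ` A) < tau C A"
      using f(1) condensing assms(5,6) by (intro tau_convex_combination_less[OF cc]) auto
  qed simp
qed

end
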